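(* Let $(\Omega,D,X)$ be a recombination scheme. For every cone $\rho$ of $D$ with apex $\tau$ and legs $\rho_i:\tau\to\theta(i)$, $i\in[k]$, the canonical morphism $DX(\tau)\to\prod_{i\in[k]}DX(\theta(i))$, whose components are the maps $DX(\rho_i)$, is a monomorphism in $\mathbf{Icm}$.
   Context: For $n\ge1$, $[n]=\{1,\dots,n\}$ ordered as usual, $[0]=\emptyset$. For a pre-ordered set $(\Omega,\preceq)$, a segment is a pair $(t,c)$ with $t:[n_1]\to[n_0]$ an order-preserving surjection and $c:[n_0]\to\Omega$; its domain is $[n_1]$. A morphism $(t,c)\to(t',c')$ is a pair $(f_1,f_0)$, $f_1:[n_1]\to[n_1']$ an order-preserving injection, $f_0:[n_0]\to[n_0']$ order-preserving, with $t'f_1=f_0t$ and $c'(f_0(i))\preceq c(i)$ for all $i$; this gives the category $\mathbf{Seg}(\Omega)$. $\mathbf{Seg}(\Omega\,|\,n)$ is the subcategory of segments of domain $[n]$ and morphisms with $f_1=\mathrm{id}$. A wide span is a finite family of arrows $\rho_i:\tau\to\theta(i)$, $i\in[k]$, with common domain (apex) $\tau$. A recombination chromology $(\Omega,D)$ is a pre-ordered set $\Omega$ with, for every $n\ge0$, a finite set $D[n]$ of wide spans in $\mathbf{Seg}(\Omega\,|\,n)$ (the cones of $D$). $\mathbf{Icm}$ is the category of idempotent commutative monoids and monoid morphisms. For a functor $X:\mathbf{Seg}(\Omega)\to\mathbf{Icm}$ and a cone $\rho$ of $D$ with apex $\upsilon$ and legs $\rho_i:\upsilon\to\theta(i)$,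 $X[\rho]:X(\upsilon)\to\prod_iX(\theta(i))$ has components $X(\rho_i)$, and $\mathsf{prj}_1,\mathsf{prj}_2:G(X,\rho)\rightrightarrows X(\upsilon)$ is the pullback of $X[\rho]$ along itself. The recombination monoid $DX:\mathbf{Seg}(\Omega)\to\mathbf{Icm}$: for each $\tau$, $q_X:X(\tau)\to DX(\tau)$ is the universal morphism in $\mathbf{Icm}$ out of $X(\tau)$ satisfying $q_X\circ X(f)\circ\mathsf{prj}_1=q_X\circ X(f)\circ\mathsf{prj}_2$ for every cone $\rho$ of $D$ (with apex $\upsilon$) and every arrow $f:\upsilon\to\tau$ in $\mathbf{Seg}(\Omega)$ (i.e. the coequalizer of the induced pair out of the coproduct of the $G(X,\rho)$); for $g:\tau\to\tau'$, $DX(g)$ is the unique morphism with $DX(g)\circ q_X=q_X\circ X(g)$. An object $\sigma$ is irreducible for $(\Omega,D,X)$ if for every arrow $f:\upsilon\to\sigma$ and every cone $\rho$ of $D$ with apex $\upsilon$, $X(f)\circ\mathsf{prj}_1=X(f)\circ\mathsf{prj}_2$ on $G(X,\rho)$. A recombination scheme is a triple $(\Omega,D,X)$ with $(\Omega,D)$ a recombination chromology and $X:\mathbf{Seg}(\Omega)\to\mathbf{Icm}$ a functor such that for every cone $\rho$ of $D$ with legs $\rho_i:\tau\to\theta(i)$, every $\theta(i)$ is irreducible for $(\Omega,D,X)$. *)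

theory Defs
  imports "HOL-Algebra.Group"
begin

text \<open>A segment (t,c) with t : [n1] -> [n0], c : [n0] -> Omega is a record; the
  functions are made extensional (t i = 0 and c i = undefined off their domains)
  so that equality of records is equality of segments.\<close>

record 'o seg =
  s1 :: nat
  s0 :: nat
  st :: "nat \<Rightarrow> nat"
  sc :: "nat \<Rightarrow> 'o"

definition is_seg :: "'o seg \<Rightarrow> bool" where
  "is_seg \<sigma> \<longleftrightarrow>
     st \<sigma> ` {1..s1 \<sigma>} = {1..s0 \<sigma>}
   \<and> (\<forall>i\<in>{1..s1 \<sigma>}. \<forall>j\<in>{1..s1 \<sigma>}. i \<le> j \<longrightarrow> st \<sigma> i \<le> st \<sigma> j)
   \<and> (\<forall>i. i \<notin> {1..s1 \<sigma>} \<longrightarrow> st \<sigma> i = 0)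
   \<and> (\<forall>i. i \<notin> {1..s0 \<sigma>} \<longrightarrow> sc \<sigma> i = undefined)"

record 'o smor =
  msrc :: "'o seg"
  mtgt :: "'o seg"
  mf1 :: "nat \<Rightarrow> nat"
  mf0 :: "nat \<Rightarrow> nat"

definition is_mor :: "('o \<Rightarrow> 'o \<Rightarrow> bool) \<Rightarrow> 'o smor \<Rightarrow> bool" where
  "is_mor leq f \<longleftrightarrow>
     is_seg (msrc f) \<and> is_seg (mtgt f)
   \<and> (\<forall>i\<in>{1..s1 (msrc f)}. mf1 f i \<in> {1..s1 (mtgt f)})
   \<and> (\<forall>i\<in>{1..s1 (msrc f)}. \<forall>j\<in>{1..s1 (msrc f)}. i < j \<longrightarrow> mf1 f i < mf1 f j)
   \<and> (\<forall>i. i \<notin> {1..s1 (msrc f)} \<longrightarrow> mf1 f i = 0)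
   \<and> (\<forall>i\<in>{1..s0 (msrc f)}. mf0 f i \<in> {1..s0 (mtgt f)})
   \<and> (\<forall>i\<in>{1..s0 (msrc f)}. \<forall>j\<in>{1..s0 (msrc f)}. i \<le> j \<longrightarrow> mf0 f i \<le> mf0 f j)
   \<and> (\<forall>i. i \<notin> {1..s0 (msrc f)} \<longrightarrow> mf0 f i = 0)
   \<and> (\<forall>i\<in>{1..s1 (msrc f)}. st (mtgt f) (mf1 f i) = mf0 f (st (msrc f) i))
   \<and> (\<forall>i\<in>{1..s0 (msrc f)}. leq (sc (mtgt f) (mf0 f i)) (sc (msrc f) i))"

definition seg_id :: "'o seg \<Rightarrow> 'o smor" where
  "seg_id \<sigma> = \<lparr> msrc = \<sigma>, mtgt = \<sigma>,
      mf1 = (\<lambda>i. if i \<in> {1..s1 \<sigma>} then i else 0),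
      mf0 = (\<lambda>i. if i \<in> {1..s0 \<sigma>} then i else 0) \<rparr>"

definition seg_comp :: "'o smor \<Rightarrow> 'o smor \<Rightarrow> 'o smor" where
  "seg_comp g f = \<lparr> msrc = msrc f, mtgt = mtgt g,
      mf1 = mf1 g \<circ> mf1 f, mf0 = mf0 g \<circ> mf0 f \<rparr>"

definition icm :: "('a, 'b) monoid_scheme \<Rightarrow> bool" where
  "icm M \<longleftrightarrow> comm_monoid M \<and> (\<forall>x\<in>carrier M. x \<otimes>\<^bsub>M\<^esub> x = x)"

definition icm_hom :: "('a, 'c) monoid_scheme \<Rightarrow> ('b, 'd) monoid_scheme \<Rightarrow> ('a \<Rightarrow> 'b) \<Rightarrow> bool" where
  "icm_hom M N h \<longleftrightarrow> h \<in> hom M N \<and> h \<one>\<^bsub>M\<^esub> = \<one>\<^bsub>N\<^esub>"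

definition icm_mono :: "'z itself \<Rightarrow> 'a monoid \<Rightarrow> 'b monoid \<Rightarrow> ('a \<Rightarrow> 'b) \<Rightarrow> bool" where
  "icm_mono (_::'z itself) M N h \<longleftrightarrow>
     (\<forall>(Z::'z monoid) h1 h2. icm Z \<and> icm_hom Z M h1 \<and> icm_hom Z M h2
        \<and> (\<forall>z\<in>carrier Z. h (h1 z) = h (h2 z))
        \<longrightarrow> (\<forall>z\<in>carrier Z. h1 z = h2 z))"

definition icm_prod :: "nat \<Rightarrow> (nat \<Rightarrow> 'a monoid) \<Rightarrow> (nat \<Rightarrow> 'a) monoid" where
  "icm_prod k N = \<lparr> carrier = (\<Pi>\<^sub>E i\<in>{1..k}. carrier (N i)),
      mult = (\<lambda>x y. \<lambda>i\<in>{1..k}. x i \<otimes>\<^bsub>N i\<^esub> y i),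
      one = (\<lambda>i\<in>{1..k}. \<one>\<^bsub>N i\<^esub>) \<rparr>"

record ('o, 'm) seg_functor =
  Xo :: "'o seg \<Rightarrow> 'm monoid"
  Xa :: "'o smor \<Rightarrow> 'm \<Rightarrow> 'm"

definition is_functor :: "('o \<Rightarrow> 'o \<Rightarrow> bool) \<Rightarrow> ('o, 'm) seg_functor \<Rightarrow> bool" where
  "is_functor leq X \<longleftrightarrow>
     (\<forall>\<sigma>. is_seg \<sigma> \<longrightarrow> icm (Xo X \<sigma>))
   \<and> (\<forall>f. is_mor leq f \<longrightarrow> icm_hom (Xo X (msrc f)) (Xo X (mtgt f)) (Xa X f))
   \<and> (\<forall>\<sigma>. is_seg \<sigma> \<longrightarrow> (\<forall>x\<in>carrier (Xo X \<sigma>). Xa X (seg_id \<sigma>) x = x))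
   \<and> (\<forall>f g. is_mor leq f \<and> is_mor leq g \<and> msrc g = mtgt f \<longrightarrow>
        (\<forall>x\<in>carrier (Xo X (msrc f)). Xa X (seg_comp g f) x = Xa X g (Xa X f x)))"

record 'o cone =
  apex :: "'o seg"
  arity :: nat
  leg :: "nat \<Rightarrow> 'o smor"

definition is_cone_in :: "('o \<Rightarrow> 'o \<Rightarrow> bool) \<Rightarrow> nat \<Rightarrow> 'o cone \<Rightarrow> bool" where
  "is_cone_in leq n \<rho> \<longleftrightarrow>
     is_seg (apex \<rho>) \<and> s1 (apex \<rho>) = n
   \<and> (\<forall>i\<in>{1..arity \<rho>}. is_mor leq (leg \<rho> i) \<and> msrc (leg \<rho> i) = apex \<rho>
        \<and> s1 (mtgt (leg \<rho> i)) = n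
        \<and> mf1 (leg \<rho> i) = (\<lambda>j. if j \<in> {1..n} then j else 0))
   \<and> (\<forall>i. i \<notin> {1..arity \<rho>} \<longrightarrow> leg \<rho> i = undefined)"

definition chromology :: "('o \<Rightarrow> 'o \<Rightarrow> bool) \<Rightarrow> 'o cone set \<Rightarrow> bool" where
  "chromology leq D \<longleftrightarrow>
     reflp leq \<and> transp leq
   \<and> (\<forall>\<rho>\<in>D. is_cone_in leq (s1 (apex \<rho>)) \<rho>)
   \<and> (\<forall>n. finite {\<rho>\<in>D. s1 (apex \<rho>) = n})"

text \<open>The pullback G(X,rho) of X[rho] along itself, as a set of pairs.\<close>

definition Gpb :: "('o, 'm) seg_functor \<Rightarrow> 'o cone \<Rightarrow> ('m \<times> 'm) set" where
  "Gpb X \<rho> = {(a, b). a \<in> carrier (Xo X (apex \<rho>)) \<and> b \<in> carrier (Xo X (apex \<rho>))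
        \<and> (\<forall>i\<in>{1..arity \<rho>}. Xa X (leg \<rho> i) a = Xa X (leg \<rho> i) b)}"

definition irreducible_seg ::
  "('o \<Rightarrow> 'o \<Rightarrow> bool) \<Rightarrow> 'o cone set \<Rightarrow> ('o, 'm) seg_functor \<Rightarrow> 'o seg \<Rightarrow> bool" where
  "irreducible_seg leq D X \<sigma> \<longleftrightarrow>
     (\<forall>\<rho>\<in>D. \<forall>f. is_mor leq f \<and> msrc f = apex \<rho> \<and> mtgt f = \<sigma> \<longrightarrow>
        (\<forall>(a, b)\<in>Gpb X \<rho>. Xa X f a = Xa X f b))"

definition recombination_scheme ::
  "('o \<Rightarrow> 'o \<Rightarrow> bool) \<Rightarrow> 'o cone set \<Rightarrow> ('o, 'm) seg_functor \<Rightarrow> bool" where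
  "recombination_scheme leq D X \<longleftrightarrow>
     chromology leq D \<and> is_functor leq X
   \<and> (\<forall>\<rho>\<in>D. \<forall>i\<in>{1..arity \<rho>}. irreducible_seg leq D X (mtgt (leg \<rho> i)))"

text \<open>DX(tau) is realised as the quotient of X(tau) by the smallest monoid congruence
  containing all pairs (X(f) a, X(f) b) with (a,b) in G(X,rho), rho in D with apex upsilon,
  f : upsilon -> tau; this is the coequalizer in Icm described in the paper.\<close>

definition gen_pairs ::
  "('o \<Rightarrow> 'o \<Rightarrow> bool) \<Rightarrow> 'o cone set \<Rightarrow> ('o, 'm) seg_functor \<Rightarrow> 'o seg \<Rightarrow> ('m \<times> 'm) set" where
  "gen_pairs leq D X \<tau> = {(Xa X f a, Xa X f b) | \<rho> f a b.
      \<rho> \<in> D \<and> is_mor leq f \<and> msrc f = apex \<rho> \<and> mtgt f = \<tau> \<and> (a, b) \<in> Gpb X \<rho>}"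

definition monoid_congruence :: "'m monoid \<Rightarrow> ('m \<times> 'm) set \<Rightarrow> bool" where
  "monoid_congruence M R \<longleftrightarrow> equiv (carrier M) R
     \<and> (\<forall>(a, b)\<in>R. \<forall>(c, d)\<in>R. (a \<otimes>\<^bsub>M\<^esub> c, b \<otimes>\<^bsub>M\<^esub> d) \<in> R)"

definition Dcong ::
  "('o \<Rightarrow> 'o \<Rightarrow> bool) \<Rightarrow> 'o cone set \<Rightarrow> ('o, 'm) seg_functor \<Rightarrow> 'o seg \<Rightarrow> ('m \<times> 'm) set" where
  "Dcong leq D X \<tau> = \<Inter>{R. monoid_congruence (Xo X \<tau>) R \<and> gen_pairs leq D X \<tau> \<subseteq> R}"

definition DXo ::
  "('o \<Rightarrow> 'o \<Rightarrow> bool) \<Rightarrow> 'o cone set \<Rightarrow> ('o, 'm) seg_functor \<Rightarrow> 'o seg \<Rightarrow> 'm set monoid" where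
  "DXo leq D X \<tau> = \<lparr> carrier = carrier (Xo X \<tau>) // Dcong leq D X \<tau>,
      mult = (\<lambda>A B. Dcong leq D X \<tau> `` {(SOME a. a \<in> A) \<otimes>\<^bsub>Xo X \<tau>\<^esub> (SOME b. b \<in> B)}),
      one = Dcong leq D X \<tau> `` {\<one>\<^bsub>Xo X \<tau>\<^esub>} \<rparr>"

text \<open>DX(g) for g : tau -> tau': the induced map on classes, DX(g)(q a) = q (X(g) a).\<close>

definition DXa ::
  "('o \<Rightarrow> 'o \<Rightarrow> bool) \<Rightarrow> 'o cone set \<Rightarrow> ('o, 'm) seg_functor \<Rightarrow> 'o smor \<Rightarrow> 'm set \<Rightarrow> 'm set" where
  "DXa leq D X g A = Dcong leq D X (mtgt g) `` {Xa X g (SOME a. a \<in> A)}"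

definition cone_canon ::
  "('o \<Rightarrow> 'o \<Rightarrow> bool) \<Rightarrow> 'o cone set \<Rightarrow> ('o, 'm) seg_functor \<Rightarrow> 'o cone \<Rightarrow> 'm set \<Rightarrow> (nat \<Rightarrow> 'm set)" where
  "cone_canon leq D X \<rho> A = (\<lambda>i\<in>{1..arity \<rho>}. DXa leq D X (leg \<rho> i) A)"

end

theory Submission
  imports Defs
begin

text \<open>At an irreducible segment every generating pair of the congruence is diagonal, so
  DX(theta) is X(theta) itself. Hence if two classes at the apex of a cone have the same image,
  representatives a, b satisfy X(rho_i) a = X(rho_i) b for all legs, i.e. (a, b) lies in
  G(X, rho); along the identity arrow of the apex this pair is itself a generating pair, so
  a and b are identified in DX(tau).\<close>

lemma monoid_congruence_Inter:
  assumes "F \<noteq> {}" "\<And>R. R \<in> F \<Longrightarrow> monoid_congruence M R"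
  shows "monoid_congruence M (\<Inter>F)"
proof -
  have equiv: "\<And>R. R \<in> F \<Longrightarrow> equiv (carrier M) R"
    using assms(2) unfolding monoid_congruence_def by blast
  obtain R0 where R0: "R0 \<in> F" using assms(1) by blast
  have "equiv (carrier M) (\<Inter>F)"
    unfolding equiv_def
  proof (intro conjI)
    show "\<Inter>F \<subseteq> carrier M \<times> carrier M" using equiv[OF R0] R0 unfolding equiv_def by blast
    show "refl_on (carrier M) (\<Inter>F)" using equiv unfolding equiv_def refl_on_def by blast
    show "sym (\<Inter>F)" using equiv unfolding equiv_def sym_def by blast
    show "trans (\<Inter>F)" using equiv unfolding equiv_def trans_def by blast
  qed
  then show ?thesis
    using assms(2) unfolding monoid_congruence_def by blast
qed

lemma monoid_congruence_full:
  assumes "icm M"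
  shows "monoid_congruence M (carrier M \<times> carrier M)"
proof -
  interpret comm_monoid M using assms unfolding icm_def by blast
  show ?thesis
    unfolding monoid_congruence_def equiv_def refl_on_def sym_def trans_def by auto
qed

lemma monoid_congruence_Id_on:
  assumes "icm M"
  shows "monoid_congruence M (Id_on (carrier M))"
proof -
  interpret comm_monoid M using assms unfolding icm_def by blast
  show ?thesis
    unfolding monoid_congruence_def equiv_def refl_on_def sym_def trans_def by auto
qed

lemma functor_hom:
  assumes "is_functor leq X" "is_mor leq f"
  shows "Xa X f \<in> hom (Xo X (msrc f)) (Xo X (mtgt f))"
  using assms unfolding is_functor_def icm_hom_def by blast

lemma gen_pairs_subset_carrier:
  assumes "is_functor leq X"
  shows "gen_pairs leq D X \<tau> \<subseteq> carrier (Xo X \<tau>) \<times> carrier (Xo X \<tau>)"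
proof
  fix p assume "p \<in> gen_pairs leq D X \<tau>"
  then obtain \<rho> f a b where p: "p = (Xa X f a, Xa X f b)" "is_mor leq f"
    "msrc f = apex \<rho>" "mtgt f = \<tau>" "(a, b) \<in> Gpb X \<rho>"
    unfolding gen_pairs_def by blast
  then have "a \<in> carrier (Xo X (msrc f))" "b \<in> carrier (Xo X (msrc f))"
    unfolding Gpb_def by auto
  with functor_hom[OF assms p(2)] p(1,4) show "p \<in> carrier (Xo X \<tau>) \<times> carrier (Xo X \<tau>)"
    unfolding hom_def by auto
qed

lemma monoid_congruence_Dcong:
  assumes "is_functor leq X" "is_seg \<tau>"
  shows "monoid_congruence (Xo X \<tau>) (Dcong leq D X \<tau>)"
proof -
  have "icm (Xo X \<tau>)" using assms unfolding is_functor_def by blast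
  then show ?thesis
    unfolding Dcong_def
    using monoid_congruence_full gen_pairs_subset_carrier[OF assms(1)]
    by (intro monoid_congruence_Inter) blast+
qed

lemma gen_pairs_subset_Dcong: "gen_pairs leq D X \<tau> \<subseteq> Dcong leq D X \<tau>"
  unfolding Dcong_def by blast

lemma Dcong_least:
  assumes "monoid_congruence (Xo X \<tau>) R" "gen_pairs leq D X \<tau> \<subseteq> R"
  shows "Dcong leq D X \<tau> \<subseteq> R"
  using assms unfolding Dcong_def by blast

lemma Dcong_irreducible:
  assumes "is_functor leq X" "is_seg \<sigma>" "irreducible_seg leq D X \<sigma>"
  shows "Dcong leq D X \<sigma> \<subseteq> Id_on (carrier (Xo X \<sigma>))"
proof (rule Dcong_least)
  show "monoid_congruence (Xo X \<sigma>) (Id_on (carrier (Xo X \<sigma>)))"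
    using assms(1,2) monoid_congruence_Id_on unfolding is_functor_def by blast
  have "gen_pairs leq D X \<sigma> \<subseteq> Id"
    using assms(3) unfolding gen_pairs_def irreducible_seg_def by fast
  then show "gen_pairs leq D X \<sigma> \<subseteq> Id_on (carrier (Xo X \<sigma>))"
    using gen_pairs_subset_carrier[OF assms(1)] by blast
qed

lemma seg_id_is_mor:
  assumes "reflp leq" "is_seg \<sigma>"
  shows "is_mor leq (seg_id \<sigma>)"
  using assms unfolding is_mor_def seg_id_def is_seg_def reflp_def
  by (auto simp: image_iff)

lemma Gpb_subset_Dcong_apex:
  assumes "reflp leq" "is_functor leq X" "\<rho> \<in> D" "is_seg (apex \<rho>)"
  shows "Gpb X \<rho> \<subseteq> Dcong leq D X (apex \<rho>)"
proof
  fix p assume p: "p \<in> Gpb X \<rho>"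
  obtain a b where ab: "p = (a, b)" "a \<in> carrier (Xo X (apex \<rho>))" "b \<in> carrier (Xo X (apex \<rho>))"
    using p unfolding Gpb_def by blast
  let ?id = "seg_id (apex \<rho>)"
  have "msrc ?id = apex \<rho>" "mtgt ?id = apex \<rho>" by (simp_all add: seg_id_def)
  then have "(Xa X ?id a, Xa X ?id b) \<in> gen_pairs leq D X (apex \<rho>)"
    using seg_id_is_mor[OF assms(1,4)] assms(3) p ab(1) unfolding gen_pairs_def by blast
  moreover have "Xa X ?id a = a" "Xa X ?id b = b"
    using assms(2,4) ab(2,3) unfolding is_functor_def by auto
  ultimately show "p \<in> Dcong leq D X (apex \<rho>)"
    using gen_pairs_subset_Dcong ab(1) by (metis in_mono)
qed

lemma quotient_some_rep:
  assumes "equiv C R" "A \<in> C // R"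
  shows "(SOME a. a \<in> A) \<in> C" "A = R `` {SOME a. a \<in> A}"
proof -
  obtain x where x: "x \<in> C" "A = R `` {x}" using assms(2) by (auto elim: quotientE)
  define a where "a = (SOME a. a \<in> A)"
  have "x \<in> A" using assms(1) x by (metis equiv_class_self)
  then have "a \<in> A" unfolding a_def by (rule someI)
  then have "(x, a) \<in> R" using x(2) by blast
  then have "a \<in> C" and "R `` {x} = R `` {a}"
    using assms(1) equiv_class_eq[OF assms(1)] unfolding equiv_def refl_on_def by blast+
  with x(2) show "a \<in> C" "A = R `` {a}" by simp_all
qed

lemma cone_canon_inj_on:
  assumes "recombination_scheme leq D X" "\<rho> \<in> D"
  shows "inj_on (cone_canon leq D X \<rho>) (carrier (DXo leq D X (apex \<rho>)))"
proof
  have chrom: "chromology leq D" and X_functor: "is_functor leq X"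
    using assms(1) unfolding recombination_scheme_def by blast+
  have refl: "reflp leq" and cone: "is_cone_in leq (s1 (apex \<rho>)) \<rho>"
    using chrom assms(2) unfolding chromology_def by blast+
  have apex: "is_seg (apex \<rho>)" using cone unfolding is_cone_in_def by blast
  let ?R = "Dcong leq D X (apex \<rho>)" and ?C = "carrier (Xo X (apex \<rho>))"
  have equiv: "equiv ?C ?R"
    using monoid_congruence_Dcong[OF X_functor apex] unfolding monoid_congruence_def by blast
  fix A B
  assume "A \<in> carrier (DXo leq D X (apex \<rho>))" "B \<in> carrier (DXo leq D X (apex \<rho>))"
    and canon: "cone_canon leq D X \<rho> A = cone_canon leq D X \<rho> B"
  then have "A \<in> ?C // ?R" "B \<in> ?C // ?R" by (simp_all add: DXo_def)
  define a b where "a = (SOME a. a \<in> A)" and "b = (SOME b. b \<in> B)"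
  have a: "a \<in> ?C" "A = ?R `` {a}" and b: "b \<in> ?C" "B = ?R `` {b}"
    using quotient_some_rep[OF equiv \<open>A \<in> ?C // ?R\<close>] quotient_some_rep[OF equiv \<open>B \<in> ?C // ?R\<close>]
    unfolding a_def b_def by simp_all
  have "Xa X (leg \<rho> i) a = Xa X (leg \<rho> i) b" if i: "i \<in> {1..arity \<rho>}" for i
  proof -
    let ?g = "leg \<rho> i"
    let ?S = "Dcong leq D X (mtgt ?g)"
    have g: "is_mor leq ?g" "msrc ?g = apex \<rho>" using cone i unfolding is_cone_in_def by blast+
    have target: "is_seg (mtgt ?g)" using g(1) unfolding is_mor_def by blast
    have "irreducible_seg leq D X (mtgt ?g)"
      using assms i unfolding recombination_scheme_def by blast
    then have diagonal: "?S \<subseteq> Id_on (carrier (Xo X (mtgt ?g)))"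
      by (rule Dcong_irreducible[OF X_functor target])
    have "equiv (carrier (Xo X (mtgt ?g))) ?S"
      using monoid_congruence_Dcong[OF X_functor target] unfolding monoid_congruence_def by blast
    moreover have "Xa X ?g a \<in> carrier (Xo X (mtgt ?g))"
      using functor_hom[OF X_functor g(1)] g(2) a(1) unfolding hom_def by auto
    ultimately have "Xa X ?g a \<in> ?S `` {Xa X ?g a}" by (rule equiv_class_self)
    also have "?S `` {Xa X ?g a} = ?S `` {Xa X ?g b}"
      using fun_cong[OF canon, of i] i unfolding cone_canon_def DXa_def a_def b_def by simp
    finally show ?thesis using diagonal by blast
  qed
  then have "(a, b) \<in> Gpb X \<rho>" using a(1) b(1) unfolding Gpb_def by blast
  then have "(a, b) \<in> ?R" using Gpb_subset_Dcong_apex[OF refl X_functor assms(2) apex] by blast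
  then show "A = B" using a(2) b(2) equiv by (simp add: equiv_class_eq)
qed

lemma inj_on_imp_icm_mono:
  assumes "inj_on h (carrier M)"
  shows "icm_mono TYPE('z) M N h"
  unfolding icm_mono_def
proof (intro allI impI ballI)
  fix Z :: "'z monoid" and h1 h2 z
  assume "icm Z \<and> icm_hom Z M h1 \<and> icm_hom Z M h2 \<and> (\<forall>z\<in>carrier Z. h (h1 z) = h (h2 z))"
    and "z \<in> carrier Z"
  then have "h (h1 z) = h (h2 z)" "h1 z \<in> carrier M" "h2 z \<in> carrier M"
    unfolding icm_hom_def hom_def by auto
  with assms show "h1 z = h2 z" by (rule inj_onD)
qed

theorem mainTheorem8:
  fixes leq :: "'o \<Rightarrow> 'o \<Rightarrow> bool"
    and D :: "'o cone set"
    and X :: "('o, 'm) seg_functor"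
    and \<rho> :: "'o cone"
  assumes "recombination_scheme leq D X"
    and "\<rho> \<in> D"
  shows "icm_mono TYPE('z)
           (DXo leq D X (apex \<rho>))
           (icm_prod (arity \<rho>) (\<lambda>i. DXo leq D X (mtgt (leg \<rho> i))))
           (cone_canon leq D X \<rho>)"
  using cone_canon_inj_on[OF assms] by (rule inj_on_imp_icm_mono)

end
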